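(* Let $m$ be a positive integer and $k$ a positive integer. If $\nu_2(m)$ is odd and $k$ is even, then $S_k(m)$ is empty.
   Context: For a positive integer $x$, $\nu_2(x)$ denotes the largest integer $e$ such that $2^e$ divides $x$. For a positive integer $m$, consider positive rational solutions $(x,y)$ of $x^y = y^{mx}$ with $x \neq 1$. For such a solution, $r = \log y / \log x$ is a positive rational number (so $y = x^r$); write $r = a/b$ with $a,b$ positive coprime integers. For an integer $k \ge 1$, $S_k(m)$ denotes the set of such solutions $(x,y)$ for which $|a-b| = k$. *)

theory Defs
  imports Complex_Main "HOL-Computational_Algebra.Primes"
begin

definition nu2 :: "nat \<Rightarrow> nat" where
  "nu2 x = multiplicity (2::nat) x"

definition S :: "nat \<Rightarrow> nat \<Rightarrow> (rat \<times> rat) set" where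
  "S k m = {(x, y). x > 0 \<and> y > 0 \<and> x \<noteq> 1 \<and>
      real_of_rat x powr real_of_rat y = real_of_rat y powr (real m * real_of_rat x) \<and>
      (\<exists>a b :: nat. a > 0 \<and> b > 0 \<and> coprime a b \<and>
          ln (real_of_rat y) / ln (real_of_rat x) = real a / real b \<and>
          \<bar>int a - int b\<bar> = int k)}"

end

theory Submission
  imports Defs
begin

text \<open>Taking logarithms, \<open>y = x^(a/b)\<close> turns \<open>x^y = y^(m x)\<close> into \<open>y = m a x / b\<close>,
  so \<open>y^b = x^a\<close> becomes \<open>(m a)^b x^b = b^b x^a\<close>. As \<open>a\<close> and \<open>b\<close> are coprime with even
  difference, both are odd. Writing \<open>x = p / q\<close> and comparing 2-adic valuations gives
  \<open>b \<nu>(m) = (a - b)(\<nu>(p) - \<nu>(q))\<close>, whose left side is odd and right side even.\<close>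

lemma coprime_same_parity_imp_odd:
  fixes a b :: nat
  assumes "coprime a b" and "even a = even b"
  shows "odd a" and "odd b"
  using assms by (metis coprime_common_divisor_nat even_numeral odd_one)+

lemma two_adic_power_identity_impossible:
  fixes m a b p q :: nat
  assumes "m > 0" "p > 0" "q > 0" "odd a" "odd b" "odd (multiplicity 2 m)"
  shows "(m * a) ^ b * p ^ b * q ^ a \<noteq> b ^ b * p ^ a * q ^ b"
proof
  assume eq: "(m * a) ^ b * p ^ b * q ^ a = b ^ b * p ^ a * q ^ b"
  have "a > 0" "b > 0" using assms(4,5) by (auto intro: Nat.gr0I)
  moreover have "multiplicity 2 a = 0" "multiplicity 2 b = 0"
    using assms(4,5) by (auto intro: not_dvd_imp_multiplicity_0)
  ultimately have
    "b * multiplicity 2 m + b * multiplicity 2 p + a * multiplicity 2 q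
       = a * multiplicity 2 p + b * multiplicity 2 q"
    using arg_cong[OF eq, of "multiplicity 2"] assms(1-3)
    by (simp add: prime_elem_multiplicity_mult_distrib prime_elem_multiplicity_power_distrib)
  then show False
    using assms(4-6) by (metis even_add even_mult_iff)
qed

lemma powr_equation_imp_power_identity:
  fixes X Y :: real and m a b :: nat
  assumes "X > 0" "X \<noteq> 1" "Y > 0" "b > 0"
    and eq: "X powr Y = Y powr (real m * X)"
    and ratio: "ln Y / ln X = real a / real b"
  shows "(real m * real a) ^ b * X ^ b = real b ^ b * X ^ a"
proof -
  have "ln X \<noteq> 0" using assms(1,2) by simp
  then have lnY: "ln Y = real a / real b * ln X"
    using ratio by (simp add: field_simps)
  have "Y * ln X = real m * X * ln Y"
    using arg_cong[OF eq, of ln] assms(1,3) by simp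
  then have "Y * ln X = real m * real a * X / real b * ln X"
    using lnY by simp
  then have Y: "Y = real m * real a * X / real b"
    using \<open>ln X \<noteq> 0\<close> by (metis mult_right_cancel)
  have "ln (Y ^ b) = ln (X ^ a)"
    using lnY assms(1,3,4) by (simp add: ln_realpow)
  then have "Y ^ b = X ^ a"
    using assms(1,3) by simp
  then show ?thesis
    using Y assms(4) by (simp add: field_simps)
qed

theorem lemma4:
  fixes m k :: nat
  assumes "m > 0" and "k > 0" and "odd (nu2 m)" and "even k"
  shows "S k m = {}"
proof (rule ccontr)
  assume "S k m \<noteq> {}"
  then obtain x y a b where xy: "x > 0" "y > 0" "x \<noteq> 1"
      "real_of_rat x powr real_of_rat y = real_of_rat y powr (real m * real_of_rat x)"
    and ab: "b > 0" "coprime a b"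
      "ln (real_of_rat y) / ln (real_of_rat x) = real a / real b" "\<bar>int a - int b\<bar> = int k"
    unfolding S_def by auto
  have "even (int a - int b)"
    using ab(4) \<open>even k\<close> by (metis abs_if even_minus even_of_nat)
  then have "even a = even b" by simp
  with ab(2) have odd: "odd a" "odd b" by (auto intro: coprime_same_parity_imp_odd)
  have id: "(real m * real a) ^ b * (real_of_rat x) ^ b = real b ^ b * (real_of_rat x) ^ a"
    using powr_equation_imp_power_identity[OF _ _ _ ab(1) xy(4) ab(3)] xy(1-3) by simp
  obtain p q :: nat where "q \<noteq> 0" and pq: "\<bar>real_of_rat x\<bar> = real p / real q"
    using Rats_abs_nat_div_natE[OF Rats_of_rat] by blast
  have x: "real_of_rat x = real p / real q"
    using pq xy(1) by simp
  have "p > 0" "q > 0"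
    using x xy(1) \<open>q \<noteq> 0\<close> by (auto intro!: Nat.gr0I)
  from id have "real ((m * a) ^ b * p ^ b * q ^ a) = real (b ^ b * p ^ a * q ^ b)"
    unfolding x using \<open>q > 0\<close> by (simp add: field_simps)
  then have "(m * a) ^ b * p ^ b * q ^ a = b ^ b * p ^ a * q ^ b"
    by (simp only: of_nat_eq_iff)
  with two_adic_power_identity_impossible[OF \<open>m > 0\<close> \<open>p > 0\<close> \<open>q > 0\<close> odd] assms(3)
  show False by (simp add: nu2_def)
qed

end
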